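(* Let $V:[-1,1]\to[0,\infty)$ be continuous, write $V(\lambda)$ for $V(\cos\lambda)$, assume $\lambda\mapsto V(\lambda)$ is $C^2(-\pi,\pi)$ and that there exist an interval $(a,b)\subset\sigma$ and constants $C_1,C_2>0$ with $\sup_{(a,b)}|V'''|\le C_1$ and $\rho\ge C_2$ on $(a,b)$. Then for any $\delta>0$, all $n$ and all $\lambda\in[-\pi,\pi]$ (all integrals over $[-\pi,\pi]$): $$\Big|\int(e^{i\lambda}-e^{i\mu})|K_n(\lambda,\mu)|^2d\mu\Big|\le\tfrac12\big[|\psi_{n-1}^{(n)}(\lambda)|^2+|\psi_n^{(n)}(\lambda)|^2\big],$$ $$\int|e^{i\lambda}-e^{i\mu}|^2|K_n(\lambda,\mu)|^2d\mu\le|\psi_{n-1}^{(n)}(\lambda)|^2+|\psi_n^{(n)}(\lambda)|^2,$$ $$\iint|e^{i\lambda}-e^{i\mu}|^2|K_n(\lambda,\mu)|^2d\lambda\,d\mu\le2,$$ $$\int_{|e^{i\lambda}-e^{i\mu}|>\delta}|K_n(\lambda,\mu)|^2d\mu\le\delta^{-2}\big[|\psi_{n-1}^{(n)}(\lambda)|^2+|\psi_n^{(n)}(\lambda)|^2\big],$$ $$\iint_{|e^{i\lambda}-e^{i\mu}|>\delta}|K_n(\lambda,\mu)|^2d\lambda\,d\mu\le2\delta^{-2}.$$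
   Context: For each $n$, let $P_k^{(n)}$, $k=0,1,2,\dots$, be obtained by the Gram–Schmidt procedure from $\{e^{ik\lambda}\}_{k\ge0}$ in $L^2([-\pi,\pi],e^{-nV(\lambda)}d\lambda)$, let $\psi_k^{(n)}(\lambda)=P_k^{(n)}(\lambda)e^{-nV(\lambda)/2}$ (orthonormal in $L^2[-\pi,\pi]$), and $K_n(\lambda,\mu)=\sum_{l=0}^{n-1}\psi_l^{(n)}(\lambda)\overline{\psi_l^{(n)}(\mu)}$. Here $\sigma$ and $\rho$ are the support and density of the limiting normalized counting measure of the eigenvalue angles for the density $p_n(\lambda_1,\dots,\lambda_n)=Z_n^{-1}\prod_{j<k}|e^{i\lambda_j}-e^{i\lambda_k}|^2\exp\{-n\sum_jV(\lambda_j)\}$ on $[-\pi,\pi]^n$ (this limit is known to exist, with compact support and bounded density, for $V\in C^2$). *)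

theory Defs
  imports "HOL-Analysis.Analysis" "HOL-Probability.Probability"
begin

definition wt :: "(real \<Rightarrow> real) \<Rightarrow> nat \<Rightarrow> real \<Rightarrow> real" where
  "wt V n x = exp (- real n * V (cos x))"

definition ip :: "(real \<Rightarrow> real) \<Rightarrow> (real \<Rightarrow> complex) \<Rightarrow> (real \<Rightarrow> complex) \<Rightarrow> complex" where
  "ip w f g = integral {-pi..pi} (\<lambda>x. f x * cnj (g x) * complex_of_real (w x))"

definition wnorm :: "(real \<Rightarrow> real) \<Rightarrow> (real \<Rightarrow> complex) \<Rightarrow> real" where
  "wnorm w f = sqrt (Re (ip w f f))"

definition gs_step :: "(real \<Rightarrow> real) \<Rightarrow> (real \<Rightarrow> complex) list \<Rightarrow> (real \<Rightarrow> complex) \<Rightarrow> (real \<Rightarrow> complex)" where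
  "gs_step w ps f =
     (let u = (\<lambda>x. f x - (\<Sum>p\<leftarrow>ps. ip w f p * p x)) in (\<lambda>x. u x / complex_of_real (wnorm w u)))"

primrec gs_list :: "(real \<Rightarrow> real) \<Rightarrow> nat \<Rightarrow> (real \<Rightarrow> complex) list" where
  "gs_list w 0 = []"
| "gs_list w (Suc k) = gs_list w k @ [gs_step w (gs_list w k) (\<lambda>x. exp (\<i> * of_nat k * of_real x))]"

definition OP :: "(real \<Rightarrow> real) \<Rightarrow> nat \<Rightarrow> nat \<Rightarrow> real \<Rightarrow> complex" where
  "OP V n k = gs_list (wt V n) (Suc k) ! k"

definition psi :: "(real \<Rightarrow> real) \<Rightarrow> nat \<Rightarrow> nat \<Rightarrow> real \<Rightarrow> complex" where
  "psi V n k x = OP V n k x * complex_of_real (exp (- real n * V (cos x) / 2))"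

definition Kn :: "(real \<Rightarrow> real) \<Rightarrow> nat \<Rightarrow> real \<Rightarrow> real \<Rightarrow> complex" where
  "Kn V n l m = (\<Sum>j<n. psi V n j l * cnj (psi V n j m))"

definition unnorm_dens :: "(real \<Rightarrow> real) \<Rightarrow> nat \<Rightarrow> (nat \<Rightarrow> real) \<Rightarrow> real" where
  "unnorm_dens V n x =
     (\<Prod>j<n. \<Prod>k\<in>{j<..<n}. (cmod (exp (\<i> * of_real (x j)) - exp (\<i> * of_real (x k))))\<^sup>2)
     * exp (- real n * (\<Sum>j<n. V (cos (x j))))"

definition angle_space :: "nat \<Rightarrow> (nat \<Rightarrow> real) measure" where
  "angle_space n = PiM {..<n} (\<lambda>_. restrict_space lborel {-pi..pi})"

definition Zn :: "(real \<Rightarrow> real) \<Rightarrow> nat \<Rightarrow> real" where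
  "Zn V n = (LINT x | angle_space n. unnorm_dens V n x)"

definition mean_stat :: "(real \<Rightarrow> real) \<Rightarrow> nat \<Rightarrow> (real \<Rightarrow> real) \<Rightarrow> real" where
  "mean_stat V n f =
     (LINT x | angle_space n. (1 / real n) * (\<Sum>j<n. f (x j)) * unnorm_dens V n x) / Zn V n"

definition limit_density :: "(real \<Rightarrow> real) \<Rightarrow> (real \<Rightarrow> real) \<Rightarrow> bool" where
  "limit_density V \<rho> \<longleftrightarrow>
     (\<forall>x. 0 \<le> \<rho> x) \<and> \<rho> integrable_on {-pi..pi} \<and>
     (\<forall>f. continuous_on {-pi..pi} f \<longrightarrow>
        (\<lambda>n. mean_stat V n f) \<longlonglongrightarrow> integral {-pi..pi} (\<lambda>x. f x * \<rho> x))"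

definition supp_dens :: "(real \<Rightarrow> real) \<Rightarrow> real set" where
  "supp_dens \<rho> = {x \<in> {-pi..pi}. \<forall>e>0. integral ({-pi..pi} \<inter> ball x e) \<rho> > 0}"

end

(*
  Up to the factor e^{-nV/2}, psi_0, psi_1, ... are the Gram--Schmidt orthonormalisation of the
  monomials e^{ik\<lambda>} for the weight e^{-nV}: psi_0, ..., psi_{n-1} span the first n monomials,
  and multiplying by e^{i\<mu>} raises the degree by one. Hence, by the reproducing property of the
  kernel, everything in the integral of (e^{i\<lambda>} - e^{i\<mu>}) |K_n(\<lambda>,\<mu>)|^2 d\<mu> cancels except the
  top component of e^{i\<mu>} P_{n-1}, which leaves the exact identity

    \<integral> (e^{i\<lambda>} - e^{i\<mu>}) |K_n(\<lambda>,\<mu>)|^2 d\<mu> = conj psi_{n-1}(\<lambda>) c_n psi_n(\<lambda>),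
    c_n = <e^{i\<mu>} P_{n-1}, P_n>,  |c_n| \<le> 1.

  AM-GM gives the first bound, |e^{i\<lambda>} - e^{i\<mu>}|^2 = 2 Re (e^{-i\<lambda>} (e^{i\<lambda>} - e^{i\<mu>})) the second,
  and the others follow by integrating in \<lambda> (each psi_k has unit norm) and by Chebyshev's
  inequality.
*)

theory Submission
  imports Defs
begin

abbreviation continuous_on_circle :: "(real \<Rightarrow> 'a::topological_space) \<Rightarrow> bool" where
  "continuous_on_circle f \<equiv> continuous_on {-pi..pi} f"

lemma ip_integrable:
  assumes "continuous_on_circle f" "continuous_on_circle g" "continuous_on_circle w"
  shows "(\<lambda>x. f x * cnj (g x) * complex_of_real (w x)) integrable_on {-pi..pi}"
  by (intro integrable_continuous_interval continuous_intros assms)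

lemma ip_cnj: "ip w g f = cnj (ip w f g)"
  unfolding ip_def Henstock_Kurzweil_Integration.integral_cnj by (simp add: mult_ac)

lemma ip_sum_left:
  assumes "finite A" "\<And>k. k \<in> A \<Longrightarrow> continuous_on_circle (f k)"
    "continuous_on_circle g" "continuous_on_circle w"
  shows "ip w (\<lambda>x. \<Sum>k\<in>A. c k * f k x) g = (\<Sum>k\<in>A. c k * ip w (f k) g)"
proof -
  have "ip w (\<lambda>x. \<Sum>k\<in>A. c k * f k x) g
     = integral {-pi..pi} (\<lambda>x. \<Sum>k\<in>A. c k * (f k x * cnj (g x) * complex_of_real (w x)))"
    unfolding ip_def by (simp add: sum_distrib_right mult.assoc)
  also have "\<dots> = (\<Sum>k\<in>A. integral {-pi..pi} (\<lambda>x. c k * (f k x * cnj (g x) * complex_of_real (w x))))"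
    by (rule Henstock_Kurzweil_Integration.integral_sum[OF assms(1)])
       (intro integrable_continuous_interval continuous_intros assms; simp)
  also have "\<dots> = (\<Sum>k\<in>A. c k * ip w (f k) g)"
    unfolding ip_def by (simp only: Henstock_Kurzweil_Integration.integral_mult_right)
  finally show ?thesis .
qed

lemma ip_sum_right:
  assumes "finite A" "\<And>k. k \<in> A \<Longrightarrow> continuous_on_circle (f k)"
    "continuous_on_circle g" "continuous_on_circle w"
  shows "ip w g (\<lambda>x. \<Sum>k\<in>A. c k * f k x) = (\<Sum>k\<in>A. cnj (c k) * ip w g (f k))"
proof -
  have "ip w g (\<lambda>x. \<Sum>k\<in>A. c k * f k x) = cnj (\<Sum>k\<in>A. c k * ip w (f k) g)"
    by (subst ip_cnj) (simp only: ip_sum_left[OF assms])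
  also have "\<dots> = (\<Sum>k\<in>A. cnj (c k) * ip w g (f k))"
    by (simp add: ip_cnj[of w g])
  finally show ?thesis .
qed

lemma ip_add_left:
  assumes "continuous_on_circle f" "continuous_on_circle h"
    "continuous_on_circle g" "continuous_on_circle w"
  shows "ip w (\<lambda>x. f x + h x) g = ip w f g + ip w h g"
  unfolding ip_def distrib_right by (rule integral_add[OF ip_integrable ip_integrable]; fact)

lemma ip_diff_left:
  assumes "continuous_on_circle f" "continuous_on_circle h"
    "continuous_on_circle g" "continuous_on_circle w"
  shows "ip w (\<lambda>x. f x - h x) g = ip w f g - ip w h g"
  unfolding ip_def left_diff_distrib by (rule integral_diff[OF ip_integrable ip_integrable]; fact)

lemma ip_scale_left: "ip w (\<lambda>x. c * f x) g = c * ip w f g"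
  unfolding ip_def by (simp only: mult.assoc Henstock_Kurzweil_Integration.integral_mult_right)

lemma ip_divide_left: "ip w (\<lambda>x. f x / c) g = ip w f g / c"
  using ip_scale_left[of w "inverse c" f g] by (simp add: divide_inverse mult.commute)

lemma ip_self:
  assumes "continuous_on_circle f" "continuous_on_circle w"
  shows "ip w f f = complex_of_real (integral {-pi..pi} (\<lambda>x. (cmod (f x))\<^sup>2 * w x))"
proof -
  have "ip w f f = integral {-pi..pi} (\<lambda>x. complex_of_real ((cmod (f x))\<^sup>2 * w x))"
    unfolding ip_def by (intro integral_cong) (simp only: complex_norm_square of_real_mult)
  also have "\<dots> = complex_of_real (integral {-pi..pi} (\<lambda>x. (cmod (f x))\<^sup>2 * w x))"
    by (intro integral_unique has_integral_of_real integrable_integral integrable_continuous_interval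
        continuous_intros assms)
  finally show ?thesis .
qed

definition orthonormal_upto :: "(real \<Rightarrow> real) \<Rightarrow> (nat \<Rightarrow> real \<Rightarrow> complex) \<Rightarrow> nat \<Rightarrow> bool" where
  "orthonormal_upto w F N \<longleftrightarrow> (\<forall>j<N. \<forall>k<N. ip w (F j) (F k) = (if j = k then 1 else 0))"

lemma orthonormal_upto_Suc:
  assumes "orthonormal_upto w F N" "\<And>k. k < N \<Longrightarrow> ip w (F N) (F k) = 0" "ip w (F N) (F N) = 1"
  shows "orthonormal_upto w F (Suc N)"
proof -
  have "ip w (F k) (F N) = 0" if "k < N" for k
    using assms(2)[OF that] ip_cnj[of w "F k" "F N"] by simp
  then show ?thesis using assms unfolding orthonormal_upto_def by (auto simp: less_Suc_eq)
qed

section \<open>Trigonometric monomials and their linear combinations\<close>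

definition emode :: "nat \<Rightarrow> real \<Rightarrow> complex" where
  "emode k x = exp (\<i> * of_nat k * of_real x)"

lemma continuous_on_emode [continuous_intros]: "continuous_on A (emode k)"
  unfolding emode_def by (intro continuous_intros)

lemma emode_1_mult: "emode 1 x * emode k x = emode (Suc k) x"
  unfolding emode_def by (simp add: exp_add[symmetric] algebra_simps)

lemma has_integral_exp_int_0:
  fixes m :: int assumes "m \<noteq> 0"
  shows "((\<lambda>x. exp (\<i> * of_int m * of_real x)) has_integral 0) {-pi..pi}"
proof -
  define c where "c = \<i> * (of_int m :: complex)"
  have c0: "c \<noteq> 0" using assms by (simp add: c_def)
  have d: "((\<lambda>z. exp (c * z) / c) has_field_derivative exp (c * of_real x)) (at (of_real x))" for x :: real
    by (rule derivative_eq_intros refl | simp add: c0)+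
  have "((\<lambda>x. exp (c * of_real x)) has_integral
          ((\<lambda>x. exp (c * of_real x) / c) pi - (\<lambda>x. exp (c * of_real x) / c) (-pi))) {-pi..pi}"
    by (rule fundamental_theorem_of_calculus) (auto intro: has_vector_derivative_real_field[OF d])
  moreover have "exp (c * of_real pi) = exp (c * of_real (-pi))"
  proof -
    have "c * of_real pi = c * of_real (-pi) + (2 * of_int m * pi) * \<i>"
      by (simp add: c_def algebra_simps)
    then have "exp (c * of_real pi) = exp (c * of_real (-pi)) * exp ((2 * of_int m * pi) * \<i>)"
      by (metis exp_add)
    also have "exp ((2 * of_int m * pi) * \<i>) = 1" by (rule exp_integer_2pi) simp
    finally show ?thesis by simp
  qed
  ultimately show ?thesis by (simp add: c_def mult.assoc)
qed

lemma ip_1_emode: "ip (\<lambda>_. 1) (emode k) (emode m) = (if k = m then complex_of_real (2 * pi) else 0)"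
proof -
  have "emode k x * cnj (emode m x) = exp (\<i> * of_int (int k - int m) * of_real x)" for x
    unfolding emode_def by (simp add: exp_cnj exp_add[symmetric] algebra_simps)
  then have "ip (\<lambda>_. 1) (emode k) (emode m) = integral {-pi..pi} (\<lambda>x. exp (\<i> * of_int (int k - int m) * of_real x))"
    unfolding ip_def by simp
  then show ?thesis
    using has_integral_exp_int_0[of "int k - int m"] by (auto simp: integral_unique scaleR_conv_of_real)
qed

definition lin_comb :: "(nat \<Rightarrow> real \<Rightarrow> complex) \<Rightarrow> nat \<Rightarrow> (real \<Rightarrow> complex) \<Rightarrow> bool" where
  "lin_comb F N f \<longleftrightarrow> (\<exists>c. \<forall>x. f x = (\<Sum>k<N. c k * F k x))"

lemma lin_comb_base: assumes "k < N" shows "lin_comb F N (F k)"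
proof -
  have "F k x = (\<Sum>j<N. (if j = k then 1 else 0) * F j x)" for x
    using assms by (simp add: if_distrib[of "\<lambda>c. c * _"] cong: if_cong)
  then show ?thesis unfolding lin_comb_def by (intro exI[of _ "\<lambda>j. if j = k then 1 else 0"] allI)
qed

lemma lin_comb_zero: "lin_comb F N (\<lambda>x. 0)"
  unfolding lin_comb_def by (rule exI[of _ "\<lambda>j. 0"]) simp

lemma lin_comb_add: "lin_comb F N f \<Longrightarrow> lin_comb F N g \<Longrightarrow> lin_comb F N (\<lambda>x. f x + g x)"
  unfolding lin_comb_def
proof (elim exE)
  fix c d assume c: "\<forall>x. f x = (\<Sum>k<N. c k * F k x)" and d: "\<forall>x. g x = (\<Sum>k<N. d k * F k x)"
  show "\<exists>e. \<forall>x. f x + g x = (\<Sum>k<N. e k * F k x)"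
    by (rule exI[of _ "\<lambda>k. c k + d k"]) (simp add: c d distrib_right sum.distrib)
qed

lemma lin_comb_scale: "lin_comb F N f \<Longrightarrow> lin_comb F N (\<lambda>x. a * f x)"
  unfolding lin_comb_def
proof (elim exE)
  fix c assume c: "\<forall>x. f x = (\<Sum>k<N. c k * F k x)"
  show "\<exists>e. \<forall>x. a * f x = (\<Sum>k<N. e k * F k x)"
    by (rule exI[of _ "\<lambda>k. a * c k"]) (simp add: c sum_distrib_left mult.assoc)
qed

lemma lin_comb_diff: "lin_comb F N f \<Longrightarrow> lin_comb F N g \<Longrightarrow> lin_comb F N (\<lambda>x. f x - g x)"
  using lin_comb_add[of F N f "\<lambda>x. (-1) * g x"] lin_comb_scale[of F N g "-1"] by simp

lemma lin_comb_divide: "lin_comb F N f \<Longrightarrow> lin_comb F N (\<lambda>x. f x / a)"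
  using lin_comb_scale[of F N f "inverse a"] by (simp add: divide_inverse mult.commute)

lemma lin_comb_sum:
  assumes "finite A" "\<And>j. j \<in> A \<Longrightarrow> lin_comb F N (g j)"
  shows "lin_comb F N (\<lambda>x. \<Sum>j\<in>A. a j * g j x)"
  using assms by (induction A rule: finite_induct) (simp_all add: lin_comb_zero lin_comb_add lin_comb_scale)

lemma lin_comb_mono:
  assumes "N \<le> M" "lin_comb F N f" shows "lin_comb F M f"
proof -
  obtain c where c: "\<forall>x. f x = (\<Sum>k<N. c k * F k x)" using assms(2) unfolding lin_comb_def by blast
  have "f x = (\<Sum>k<M. (if k < N then c k else 0) * F k x)" for x
  proof -
    have "(\<Sum>k<M. (if k < N then c k else 0) * F k x) = (\<Sum>k<N. (if k < N then c k else 0) * F k x)"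
      by (rule sum.mono_neutral_right) (use assms(1) in auto)
    then show ?thesis using c by simp
  qed
  then show ?thesis unfolding lin_comb_def by (intro exI[of _ "\<lambda>k. if k < N then c k else 0"] allI)
qed

lemma lin_comb_trans:
  assumes "\<And>k. k < N \<Longrightarrow> lin_comb G M (F k)" "lin_comb F N f" shows "lin_comb G M f"
proof -
  obtain c where "\<forall>x. f x = (\<Sum>k<N. c k * F k x)" using assms(2) unfolding lin_comb_def by blast
  then have "f = (\<lambda>x. \<Sum>k\<in>{..<N}. c k * F k x)" by auto
  then show ?thesis by (auto intro: lin_comb_sum assms(1))
qed

lemma lin_comb_continuous:
  assumes "\<And>k. k < N \<Longrightarrow> continuous_on S (F k)" "lin_comb F N f" shows "continuous_on S f"
proof -
  obtain c where "\<forall>x. f x = (\<Sum>k<N. c k * F k x)" using assms(2) unfolding lin_comb_def by blast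
  then have "f = (\<lambda>x. \<Sum>k<N. c k * F k x)" by auto
  then show ?thesis by (auto intro!: continuous_intros assms(1))
qed

lemma lin_comb_emode_continuous: "lin_comb emode N f \<Longrightarrow> continuous_on S f"
  by (rule lin_comb_continuous[OF continuous_on_emode])

lemma lin_comb_emode_shift:
  assumes "lin_comb emode N f" shows "lin_comb emode (Suc N) (\<lambda>x. emode 1 x * f x)"
proof -
  obtain c where c: "\<forall>x. f x = (\<Sum>k<N. c k * emode k x)" using assms unfolding lin_comb_def by blast
  have "emode 1 x * f x = (\<Sum>k\<in>{..<N}. c k * emode (Suc k) x)" for x
    unfolding c[rule_format] sum_distrib_left
    by (intro sum.cong refl) (metis emode_1_mult mult.left_commute)
  moreover have "lin_comb emode (Suc N) (\<lambda>x. \<Sum>k\<in>{..<N}. c k * emode (Suc k) x)"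
    by (rule lin_comb_sum) (auto intro: lin_comb_base)
  ultimately show ?thesis by simp
qed

text \<open>Linear independence of the monomials, via their orthogonality for the flat weight.\<close>
lemma emode_not_lin_comb:
  assumes "lin_comb emode N g" shows "\<exists>x\<in>{-pi..pi}. emode N x \<noteq> g x"
proof (rule ccontr)
  assume "\<not> ?thesis"
  then have eq: "\<And>x. x \<in> {-pi..pi} \<Longrightarrow> emode N x = g x" by blast
  obtain c where c: "\<forall>x. g x = (\<Sum>k<N. c k * emode k x)" using assms unfolding lin_comb_def by blast
  have "complex_of_real (2 * pi) = ip (\<lambda>_. 1) (emode N) (emode N)" by (simp add: ip_1_emode)
  also have "\<dots> = ip (\<lambda>_. 1) (\<lambda>x. \<Sum>k\<in>{..<N}. c k * emode k x) (emode N)"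
    unfolding ip_def using eq c by (intro integral_cong) auto
  also have "\<dots> = (\<Sum>k\<in>{..<N}. c k * ip (\<lambda>_. 1) (emode k) (emode N))"
    by (rule ip_sum_left) (auto intro: continuous_intros)
  also have "\<dots> = 0" by (intro sum.neutral) (simp add: ip_1_emode)
  finally show False by simp
qed

lemma orthonormal_expansion:
  assumes w: "continuous_on_circle w" and F: "\<And>j. j < N \<Longrightarrow> continuous_on_circle (F j)"
    and orth: "orthonormal_upto w F N" and f: "lin_comb F N f"
  shows "f x = (\<Sum>j<N. ip w f (F j) * F j x)"
proof -
  obtain c where c: "\<forall>x. f x = (\<Sum>k<N. c k * F k x)" using f unfolding lin_comb_def by blast
  have "ip w f (F j) = c j" if j: "j < N" for j
  proof -
    have "f = (\<lambda>x. \<Sum>k\<in>{..<N}. c k * F k x)" using c by auto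
    then have "ip w f (F j) = (\<Sum>k\<in>{..<N}. c k * ip w (F k) (F j))"
      using ip_sum_left[of "{..<N}" F "F j" w c] F w j by simp
    also have "\<dots> = (\<Sum>k\<in>{..<N}. if k = j then c k else 0)"
      using orth j by (intro sum.cong refl) (simp add: orthonormal_upto_def)
    also have "\<dots> = c j" using j by simp
    finally show ?thesis .
  qed
  then show ?thesis using c by simp
qed

section \<open>Gram--Schmidt orthonormalisation of the monomials\<close>

definition gs_poly :: "(real \<Rightarrow> real) \<Rightarrow> nat \<Rightarrow> real \<Rightarrow> complex" where
  "gs_poly w j = gs_list w (Suc j) ! j"

definition orth_residual ::
    "(real \<Rightarrow> real) \<Rightarrow> (nat \<Rightarrow> real \<Rightarrow> complex) \<Rightarrow> nat \<Rightarrow> (real \<Rightarrow> complex) \<Rightarrow> real \<Rightarrow> complex" where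
  "orth_residual w F N g = (\<lambda>x. g x - (\<Sum>j<N. ip w g (F j) * F j x))"

lemma gs_list_length: "length (gs_list w N) = N"
  by (induction N) auto

lemma gs_list_nth: "j < N \<Longrightarrow> gs_list w N ! j = gs_poly w j"
  unfolding gs_poly_def by (induction N) (auto simp: nth_append gs_list_length less_Suc_eq)

lemma gs_poly_eq_normalized_residual:
  "gs_poly w N = (\<lambda>x. orth_residual w (gs_poly w) N (emode N) x
                        / complex_of_real (wnorm w (orth_residual w (gs_poly w) N (emode N))))"
proof -
  have sum: "(\<Sum>p\<leftarrow>gs_list w N. ip w (emode N) p * p x) = (\<Sum>j<N. ip w (emode N) (gs_poly w j) * gs_poly w j x)" for x
    by (simp add: sum_list_sum_nth atLeast0LessThan gs_list_length gs_list_nth)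
  have "gs_poly w N = gs_step w (gs_list w N) (emode N)"
    unfolding gs_poly_def by (simp add: nth_append gs_list_length emode_def[abs_def])
  then show ?thesis
    unfolding gs_step_def Let_def orth_residual_def sum .
qed

lemma ip_orth_residual:
  assumes w: "continuous_on_circle w" and F: "\<And>j. j < N \<Longrightarrow> continuous_on_circle (F j)"
    and g: "continuous_on_circle g" and orth: "orthonormal_upto w F N" and k: "k < N"
  shows "ip w (orth_residual w F N g) (F k) = 0"
proof -
  have "ip w (orth_residual w F N g) (F k) = ip w g (F k) - ip w (\<lambda>x. \<Sum>j\<in>{..<N}. ip w g (F j) * F j x) (F k)"
    unfolding orth_residual_def by (rule ip_diff_left) (auto intro!: continuous_intros F g w k)
  also have "ip w (\<lambda>x. \<Sum>j\<in>{..<N}. ip w g (F j) * F j x) (F k) = (\<Sum>j\<in>{..<N}. ip w g (F j) * ip w (F j) (F k))"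
    by (rule ip_sum_left) (auto intro: F k w)
  also have "\<dots> = (\<Sum>j\<in>{..<N}. if j = k then ip w g (F k) else 0)"
    using orth k by (intro sum.cong refl) (simp add: orthonormal_upto_def)
  finally show ?thesis using k by simp
qed

lemma lin_comb_orth_residual_emode:
  assumes "\<And>j. j < N \<Longrightarrow> lin_comb emode N (F j)"
  shows "lin_comb emode (Suc N) (orth_residual w F N (emode N))"
  unfolding orth_residual_def
  by (intro lin_comb_diff lin_comb_base lin_comb_mono[of N "Suc N"] lin_comb_sum assms) auto

locale positive_weight =
  fixes w :: "real \<Rightarrow> real"
  assumes continuous_weight: "continuous_on_circle w"
    and weight_pos: "\<And>x. x \<in> {-pi..pi} \<Longrightarrow> 0 < w x"
begin

lemma integral_weighted_norm_pos:
  assumes u: "continuous_on_circle u" and x: "x \<in> {-pi..pi}" "u x \<noteq> 0"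
  shows "0 < integral {-pi..pi} (\<lambda>x. (cmod (u x))\<^sup>2 * w x)"
proof -
  have nonneg: "\<And>x. x \<in> {-pi..pi} \<Longrightarrow> 0 \<le> (cmod (u x))\<^sup>2 * w x"
    using weight_pos by (simp add: less_imp_le)
  have int: "(\<lambda>x. (cmod (u x))\<^sup>2 * w x) integrable_on {-pi..pi}"
    by (intro integrable_continuous_interval continuous_intros u continuous_weight)
  have "integral {-pi..pi} (\<lambda>x. (cmod (u x))\<^sup>2 * w x) \<noteq> 0"
  proof
    assume "integral {-pi..pi} (\<lambda>x. (cmod (u x))\<^sup>2 * w x) = 0"
    then have zero: "((\<lambda>x. (cmod (u x))\<^sup>2 * w x) has_integral 0) (cbox (-pi) pi)"
      using int by (simp add: has_integral_integral)
    have ne: "box (-pi) pi \<noteq> {}" using pi_gt_zero by (simp add: not_le)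
    have "(cmod (u x))\<^sup>2 * w x = 0"
      by (rule has_integral_0_cbox_imp_0[OF _ _ zero ne])
         (use x nonneg in \<open>auto intro!: continuous_intros u continuous_weight\<close>)
    then show False using x weight_pos[of x] by simp
  qed
  then show ?thesis using integral_nonneg[OF int nonneg] by simp
qed

lemma ip_normalized_self:
  assumes u: "continuous_on_circle u" and pos: "0 < integral {-pi..pi} (\<lambda>x. (cmod (u x))\<^sup>2 * w x)"
  shows "ip w (\<lambda>x. u x / complex_of_real (wnorm w u)) (\<lambda>x. u x / complex_of_real (wnorm w u)) = 1"
proof -
  define I where "I = integral {-pi..pi} (\<lambda>x. (cmod (u x))\<^sup>2 * w x)"
  have r: "wnorm w u = sqrt I"
    unfolding wnorm_def I_def ip_self[OF u continuous_weight] by simp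
  have "(\<lambda>x. (cmod (u x / complex_of_real (wnorm w u)))\<^sup>2 * w x) = (\<lambda>x. (cmod (u x))\<^sup>2 * w x / I)"
    using pos by (auto simp: r I_def norm_divide power_divide)
  then have "integral {-pi..pi} (\<lambda>x. (cmod (u x / complex_of_real (wnorm w u)))\<^sup>2 * w x) = 1"
    using pos by (simp add: I_def)
  then show ?thesis
    by (subst ip_self) (auto intro!: continuous_intros u continuous_weight)
qed

lemma integral_norm_orth_residual_emode_pos:
  assumes F: "\<And>j. j < N \<Longrightarrow> lin_comb emode N (F j)"
  shows "0 < integral {-pi..pi} (\<lambda>x. (cmod (orth_residual w F N (emode N) x))\<^sup>2 * w x)"
proof -
  define G where "G = (\<lambda>x. \<Sum>j\<in>{..<N}. ip w (emode N) (F j) * F j x)"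
  have "lin_comb emode N G"
    unfolding G_def by (rule lin_comb_sum) (auto intro: F)
  then obtain x where "x \<in> {-pi..pi}" "emode N x \<noteq> G x"
    using emode_not_lin_comb by blast
  moreover have "continuous_on_circle (orth_residual w F N (emode N))"
    by (rule lin_comb_emode_continuous[OF lin_comb_orth_residual_emode[OF F]])
  ultimately show ?thesis
    by (intro integral_weighted_norm_pos) (auto simp: orth_residual_def G_def)
qed

lemma gram_schmidt:
  "(\<forall>j<N. lin_comb emode (Suc j) (gs_poly w j)) \<and> orthonormal_upto w (gs_poly w) N
    \<and> (\<forall>k<N. lin_comb (gs_poly w) N (emode k))"
proof (induction N)
  case 0
  show ?case by (simp add: orthonormal_upto_def)
next
  case (Suc N)
  let ?Q = "gs_poly w"
  define u where "u = orth_residual w ?Q N (emode N)"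
  define r where "r = wnorm w u"
  have span: "\<And>j. j < N \<Longrightarrow> lin_comb emode (Suc j) (?Q j)" and orth: "orthonormal_upto w ?Q N"
    and span_emode: "\<And>k. k < N \<Longrightarrow> lin_comb ?Q N (emode k)"
    using Suc.IH by auto
  have span_N: "\<And>j. j < N \<Longrightarrow> lin_comb emode N (?Q j)"
    using span lin_comb_mono by (metis Suc_leI)
  have u_span: "lin_comb emode (Suc N) u"
    unfolding u_def by (rule lin_comb_orth_residual_emode[OF span_N])
  have u_cont: "continuous_on S u" for S
    using u_span by (rule lin_comb_emode_continuous)
  have u_pos: "0 < integral {-pi..pi} (\<lambda>x. (cmod (u x))\<^sup>2 * w x)"
    unfolding u_def by (rule integral_norm_orth_residual_emode_pos[OF span_N])
  have r_pos: "0 < r"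
    unfolding r_def wnorm_def ip_self[OF u_cont continuous_weight] using u_pos by simp
  have Q_N: "?Q N = (\<lambda>x. u x / complex_of_real r)"
    unfolding u_def r_def by (rule gs_poly_eq_normalized_residual)
  have "lin_comb emode (Suc N) (?Q N)"
    unfolding Q_N by (rule lin_comb_divide[OF u_span])
  then have span': "\<forall>j<Suc N. lin_comb emode (Suc j) (?Q j)"
    using span by (auto simp: less_Suc_eq)
  have "orthonormal_upto w ?Q (Suc N)"
  proof (rule orthonormal_upto_Suc[OF orth])
    have "ip w u (?Q k) = 0" if "k < N" for k
      unfolding u_def using that continuous_weight span lin_comb_emode_continuous orth
      by (intro ip_orth_residual) (auto intro: continuous_intros)
    then show "ip w (?Q N) (?Q k) = 0" if "k < N" for k
      using that by (simp add: Q_N ip_divide_left)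
    show "ip w (?Q N) (?Q N) = 1"
      unfolding Q_N r_def by (rule ip_normalized_self[OF u_cont u_pos])
  qed
  moreover have "lin_comb ?Q (Suc N) (emode N)"
  proof -
    have "emode N = (\<lambda>x. complex_of_real r * ?Q N x + (\<Sum>j\<in>{..<N}. ip w (emode N) (?Q j) * ?Q j x))"
      using r_pos by (auto simp: Q_N u_def orth_residual_def)
    moreover have "lin_comb ?Q (Suc N) (\<lambda>x. complex_of_real r * ?Q N x + (\<Sum>j\<in>{..<N}. ip w (emode N) (?Q j) * ?Q j x))"
      by (intro lin_comb_add lin_comb_scale lin_comb_base lin_comb_sum) auto
    ultimately show ?thesis by simp
  qed
  moreover have "lin_comb ?Q (Suc N) (emode k)" if "k < N" for k
    using span_emode[OF that] by (rule lin_comb_mono[rotated]) simp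
  ultimately show ?case using span' by (auto simp: less_Suc_eq)
qed

lemma orthonormal_gs_poly: "orthonormal_upto w (gs_poly w) N"
  using gram_schmidt by blast

lemma lin_comb_gs_poly_iff: "lin_comb (gs_poly w) N f \<longleftrightarrow> lin_comb emode N f"
proof
  have "lin_comb emode N (gs_poly w j)" if j: "j < N" for j
  proof (rule lin_comb_mono)
    show "lin_comb emode (Suc j) (gs_poly w j)" using gram_schmidt[of N] j by blast
  qed (use j in simp)
  then show "lin_comb (gs_poly w) N f \<Longrightarrow> lin_comb emode N f" by (rule lin_comb_trans)
next
  have "\<And>k. k < N \<Longrightarrow> lin_comb (gs_poly w) N (emode k)" using gram_schmidt[of N] by blast
  then show "lin_comb emode N f \<Longrightarrow> lin_comb (gs_poly w) N f" by (rule lin_comb_trans)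
qed

lemma lin_comb_gs_poly_continuous: "lin_comb (gs_poly w) N f \<Longrightarrow> continuous_on S f"
  by (simp add: lin_comb_gs_poly_iff lin_comb_emode_continuous)

lemma continuous_on_gs_poly: "continuous_on S (gs_poly w j)"
  by (rule lin_comb_gs_poly_continuous[OF lin_comb_base[of j "Suc j"]]) simp

lemma ip_gs_poly_self: "ip w (gs_poly w j) (gs_poly w j) = 1"
  using orthonormal_gs_poly[of "Suc j"] by (simp add: orthonormal_upto_def)

lemma integral_norm_gs_poly_sq: "integral {-pi..pi} (\<lambda>x. (cmod (gs_poly w j x))\<^sup>2 * w x) = 1"
  using ip_gs_poly_self[of j] by (simp add: ip_self[OF continuous_on_gs_poly continuous_weight])

lemma gs_poly_expansion:
  "lin_comb (gs_poly w) N f \<Longrightarrow> f x = (\<Sum>j<N. ip w f (gs_poly w j) * gs_poly w j x)"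
  by (rule orthonormal_expansion[OF continuous_weight continuous_on_gs_poly orthonormal_gs_poly])

end

definition gs_kernel :: "(real \<Rightarrow> real) \<Rightarrow> nat \<Rightarrow> real \<Rightarrow> real \<Rightarrow> complex" where
  "gs_kernel w n l m = (\<Sum>j<n. gs_poly w j l * cnj (gs_poly w j m))"

lemma norm_emode [simp]: "cmod (emode k x) = 1"
  by (simp add: emode_def)

context positive_weight
begin

lemma cnj_gs_kernel: "cnj (gs_kernel w n l m) = (\<Sum>j<n. cnj (gs_poly w j l) * gs_poly w j m)"
  by (simp add: gs_kernel_def)

lemma ip_cnj_gs_kernel:
  assumes "continuous_on_circle h"
  shows "ip w h (\<lambda>m. cnj (gs_kernel w n l m)) = (\<Sum>j<n. ip w h (gs_poly w j) * gs_poly w j l)"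
proof -
  have "ip w h (\<lambda>m. cnj (gs_kernel w n l m))
      = ip w h (\<lambda>m. \<Sum>j\<in>{..<n}. cnj (gs_poly w j l) * gs_poly w j m)"
    by (simp add: cnj_gs_kernel)
  also have "\<dots> = (\<Sum>j\<in>{..<n}. cnj (cnj (gs_poly w j l)) * ip w h (gs_poly w j))"
    by (rule ip_sum_right) (auto intro: assms continuous_on_gs_poly continuous_weight)
  finally show ?thesis by (simp add: mult.commute)
qed

lemma gs_kernel_reproducing:
  assumes "lin_comb (gs_poly w) n h"
  shows "ip w h (\<lambda>m. cnj (gs_kernel w n l m)) = h l"
  using gs_poly_expansion[OF assms, of l] ip_cnj_gs_kernel[OF lin_comb_gs_poly_continuous[OF assms]]
  by simp

lemma ip_gs_poly_cnj_gs_kernel: "ip w (gs_poly w n) (\<lambda>m. cnj (gs_kernel w n l m)) = 0"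
proof -
  have "ip w (gs_poly w n) (gs_poly w j) = 0" if "j < n" for j
    using orthonormal_gs_poly[of "Suc n"] that by (simp add: orthonormal_upto_def)
  then show ?thesis by (simp add: ip_cnj_gs_kernel continuous_on_gs_poly)
qed

lemma lin_comb_gs_poly_Suc_residual:
  assumes "lin_comb (gs_poly w) (Suc n) f"
  shows "lin_comb (gs_poly w) n (\<lambda>x. f x - ip w f (gs_poly w n) * gs_poly w n x)"
proof -
  have "(\<lambda>x. f x - ip w f (gs_poly w n) * gs_poly w n x)
      = (\<lambda>x. \<Sum>j\<in>{..<n}. ip w f (gs_poly w j) * gs_poly w j x)"
    using gs_poly_expansion[OF assms] by simp
  moreover have "lin_comb (gs_poly w) n (\<lambda>x. \<Sum>j\<in>{..<n}. ip w f (gs_poly w j) * gs_poly w j x)"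
    by (rule lin_comb_sum) (auto intro: lin_comb_base)
  ultimately show ?thesis by simp
qed

text \<open>Multiplication by \<open>e^{i\<lambda>}\<close> raises degrees by one, so only the top term of the kernel
  leaves the span of the first \<open>n\<close> orthonormal functions.\<close>
lemma lin_comb_shift_cnj_gs_kernel:
  assumes "1 \<le> n"
  shows "lin_comb (gs_poly w) n (\<lambda>m. emode 1 m * cnj (gs_kernel w n l m) - cnj (gs_poly w (n - 1) l)
           * ip w (\<lambda>x. emode 1 x * gs_poly w (n - 1) x) (gs_poly w n) * gs_poly w n m)"
proof -
  obtain n' where n: "n = Suc n'" using assms by (cases n) auto
  let ?Q = "gs_poly w"
  define f where "f = (\<lambda>x. emode 1 x * ?Q n' x)"
  define c where "c = ip w f (?Q n)"
  have shift: "lin_comb emode (Suc (Suc j)) (\<lambda>x. emode 1 x * ?Q j x)" for j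
  proof (rule lin_comb_emode_shift)
    show "lin_comb emode (Suc j) (?Q j)"
      unfolding lin_comb_gs_poly_iff[symmetric] by (rule lin_comb_base) simp
  qed
  have "lin_comb ?Q (Suc n) f"
    unfolding f_def lin_comb_gs_poly_iff n by (rule shift)
  then have R: "lin_comb ?Q n (\<lambda>x. f x - c * ?Q n x)"
    unfolding c_def by (rule lin_comb_gs_poly_Suc_residual)
  define H1 where "H1 = (\<lambda>m. \<Sum>j\<in>{..<n'}. cnj (?Q j l) * (emode 1 m * ?Q j m))"
  have H1: "lin_comb ?Q n H1"
    unfolding H1_def lin_comb_gs_poly_iff n
  proof (rule lin_comb_sum)
    show "lin_comb emode (Suc n') (\<lambda>m. emode 1 m * ?Q j m)" if "j \<in> {..<n'}" for j
      using that by (intro lin_comb_mono[OF _ shift]) simp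
  qed simp
  have "emode 1 m * cnj (gs_kernel w n l m) = H1 m + cnj (?Q n' l) * f m" for m
    unfolding cnj_gs_kernel n sum.lessThan_Suc distrib_left sum_distrib_left H1_def f_def
    by (simp only: mult.left_commute)
  then have "(\<lambda>m. emode 1 m * cnj (gs_kernel w n l m) - cnj (?Q (n - 1) l)
           * ip w (\<lambda>x. emode 1 x * ?Q (n - 1) x) (?Q n) * ?Q n m)
      = (\<lambda>m. H1 m + cnj (?Q n' l) * (f m - c * ?Q n m))"
    by (simp add: n c_def f_def algebra_simps)
  then show ?thesis by (simp add: lin_comb_add lin_comb_scale H1 R)
qed

lemma integral_shift_gs_kernel:
  assumes "1 \<le> n"
  shows "integral {-pi..pi} (\<lambda>m. (exp (\<i> * of_real l) - exp (\<i> * of_real m))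
            * complex_of_real ((cmod (gs_kernel w n l m))\<^sup>2 * w m))
       = cnj (gs_poly w (n - 1) l) * ip w (\<lambda>x. emode 1 x * gs_poly w (n - 1) x) (gs_poly w n)
            * gs_poly w n l"
    (is "_ = ?b * ?c * _")
proof -
  define G where "G = (\<lambda>m. cnj (gs_kernel w n l m))"
  define H where "H = (\<lambda>m. emode 1 m * G m - ?b * ?c * gs_poly w n m)"
  have H: "lin_comb (gs_poly w) n H"
    unfolding H_def G_def by (rule lin_comb_shift_cnj_gs_kernel[OF assms])
  have shift: "\<And>m. emode 1 m * G m = H m + ?b * ?c * gs_poly w n m"
    by (simp add: H_def)
  have G: "lin_comb (gs_poly w) n G"
    unfolding G_def cnj_gs_kernel by (rule lin_comb_sum) (auto intro: lin_comb_base)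
  have G_cont: "continuous_on S G" for S
    using G by (rule lin_comb_gs_poly_continuous)
  have H_cont: "continuous_on S H" for S
    using H by (rule lin_comb_gs_poly_continuous)
  have "integral {-pi..pi} (\<lambda>m. (exp (\<i> * of_real l) - exp (\<i> * of_real m))
            * complex_of_real ((cmod (gs_kernel w n l m))\<^sup>2 * w m))
      = ip w (\<lambda>m. emode 1 l * G m - emode 1 m * G m) G"
    unfolding ip_def G_def
    by (intro integral_cong) (simp only: of_real_mult complex_norm_square, simp add: emode_def algebra_simps)
  also have "\<dots> = emode 1 l * ip w G G - ip w (\<lambda>m. emode 1 m * G m) G"
    by (subst ip_diff_left) (auto intro!: continuous_intros G_cont continuous_weight simp: ip_scale_left)
  also have "ip w G G = G l"
    unfolding G_def by (rule gs_kernel_reproducing[OF G[unfolded G_def]])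
  also have "ip w (\<lambda>m. emode 1 m * G m) G = ip w H G + ?b * ?c * ip w (gs_poly w n) G"
    unfolding shift
    by (subst ip_add_left)
       (auto intro!: continuous_intros H_cont G_cont continuous_on_gs_poly continuous_weight
         simp: ip_scale_left)
  also have "\<dots> = H l"
    unfolding G_def by (simp add: gs_kernel_reproducing[OF H] ip_gs_poly_cnj_gs_kernel)
  finally show ?thesis using shift[of l] by (simp add: algebra_simps)
qed

text \<open>Cauchy--Schwarz in its AM--GM form, using only that both factors have unit norm.\<close>
lemma norm_ip_shift_gs_poly_le: "cmod (ip w (\<lambda>x. emode 1 x * gs_poly w j x) (gs_poly w k)) \<le> 1"
proof -
  let ?a = "gs_poly w j" and ?q = "gs_poly w k"
  have w0: "\<And>x. x \<in> {-pi..pi} \<Longrightarrow> 0 \<le> w x" using weight_pos by (simp add: less_imp_le)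
  have "cmod (ip w (\<lambda>x. emode 1 x * ?a x) ?q) \<le>
      integral {-pi..pi} (\<lambda>x. ((cmod (?a x))\<^sup>2 * w x + (cmod (?q x))\<^sup>2 * w x) / 2)"
    unfolding ip_def
  proof (rule integral_norm_bound_integral)
    show "(\<lambda>x. emode 1 x * ?a x * cnj (?q x) * complex_of_real (w x)) integrable_on {-pi..pi}"
      by (intro integrable_continuous_interval continuous_intros continuous_on_gs_poly continuous_weight)
    show "(\<lambda>x. ((cmod (?a x))\<^sup>2 * w x + (cmod (?q x))\<^sup>2 * w x) / 2) integrable_on {-pi..pi}"
      by (intro integrable_continuous_interval continuous_intros continuous_on_gs_poly continuous_weight) auto
    fix x assume x: "x \<in> {-pi..pi}"
    have "cmod (emode 1 x * ?a x * cnj (?q x) * complex_of_real (w x)) = cmod (?a x) * cmod (?q x) * w x"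
      using w0[OF x] by (simp add: norm_mult)
    also have "\<dots> \<le> ((cmod (?a x))\<^sup>2 + (cmod (?q x))\<^sup>2) / 2 * w x"
      using sum_squares_bound[of "cmod (?a x)" "cmod (?q x)"] w0[OF x] by (intro mult_right_mono) simp_all
    finally show "cmod (emode 1 x * ?a x * cnj (?q x) * complex_of_real (w x))
        \<le> ((cmod (?a x))\<^sup>2 * w x + (cmod (?q x))\<^sup>2 * w x) / 2"
      by (simp add: algebra_simps)
  qed
  also have "\<dots> = 1"
    by (simp only: Henstock_Kurzweil_Integration.integral_divide, subst integral_add)
       (auto simp: integral_norm_gs_poly_sq
         intro!: integrable_continuous_interval continuous_intros continuous_on_gs_poly continuous_weight)
  finally show ?thesis .
qed

end

section \<open>The bounds for the Christoffel--Darboux kernel\<close>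

lemma norm_diff_unit_sq:
  fixes a b :: complex assumes "cmod a = 1" "cmod b = 1"
  shows "(cmod (a - b))\<^sup>2 = 2 * Re (cnj a * (a - b))"
proof -
  have "(Re a)\<^sup>2 + (Im a)\<^sup>2 = 1" "(Re b)\<^sup>2 + (Im b)\<^sup>2 = 1"
    using assms cmod_power2[of a] cmod_power2[of b] by simp_all
  moreover have "(cmod (a - b))\<^sup>2 = (Re a - Re b)\<^sup>2 + (Im a - Im b)\<^sup>2"
    by (simp add: cmod_power2)
  moreover have "Re (cnj a * (a - b)) = (Re a)\<^sup>2 + (Im a)\<^sup>2 - (Re a * Re b + Im a * Im b)"
    by (simp add: power2_eq_square algebra_simps)
  ultimately show ?thesis by (simp add: power2_diff)
qed

text \<open>On the unit circle \<open>|e^{i\<lambda>} - e^{i\<mu>}|\<^sup>2 = 2 Re (e^{-i\<lambda>} (e^{i\<lambda>} - e^{i\<mu>}))\<close>.\<close>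
lemma integral_chord_sq_le:
  fixes k :: "real \<Rightarrow> real"
  assumes k: "continuous_on_circle k"
  shows "integral {-pi..pi} (\<lambda>m. (cmod (exp (\<i> * of_real l) - exp (\<i> * of_real m)))\<^sup>2 * k m)
    \<le> 2 * cmod (integral {-pi..pi} (\<lambda>m. (exp (\<i> * of_real l) - exp (\<i> * of_real m)) * complex_of_real (k m)))"
proof -
  let ?e = "\<lambda>t. exp (\<i> * complex_of_real t)"
  define F where "F = (\<lambda>m. 2 * cnj (?e l) * ((?e l - ?e m) * complex_of_real (k m)))"
  have F: "F integrable_on {-pi..pi}"
    unfolding F_def by (intro integrable_continuous_interval continuous_intros k)
  have "integral {-pi..pi} (\<lambda>m. (cmod (?e l - ?e m))\<^sup>2 * k m) = integral {-pi..pi} (Re \<circ> F)"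
    unfolding F_def o_def by (intro integral_cong) (simp add: norm_diff_unit_sq mult_ac)
  also have "\<dots> = Re (integral {-pi..pi} F)"
    by (rule integral_linear[OF F bounded_linear_Re])
  also have "\<dots> \<le> cmod (integral {-pi..pi} F)"
    by (rule complex_Re_le_cmod)
  also have "\<dots> = 2 * cmod (integral {-pi..pi} (\<lambda>m. (?e l - ?e m) * complex_of_real (k m)))"
    unfolding F_def Henstock_Kurzweil_Integration.integral_mult_right by (simp add: norm_mult)
  finally show ?thesis .
qed

text \<open>The last hypothesis covers the junk value \<open>integral S f = 0\<close> for non-integrable \<open>f\<close>.\<close>
lemma integral_le_if_integrable:
  fixes f g :: "real \<Rightarrow> real"
  assumes "g integrable_on S" "\<And>x. x \<in> S \<Longrightarrow> f x \<le> g x" "0 \<le> integral S g"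
  shows "integral S f \<le> integral S g"
  using assms integral_le[of f S g] by (cases "f integrable_on S") (auto simp: not_integrable_integral)

lemma integral_superlevel_le:
  fixes f d :: "real \<Rightarrow> real"
  assumes int: "(\<lambda>x. (d x)\<^sup>2 * f x) integrable_on T" and f: "\<And>x. x \<in> T \<Longrightarrow> 0 \<le> f x"
    and \<delta>: "0 < \<delta>"
  shows "integral {x \<in> T. \<delta> < d x} f \<le> \<delta> powr (-2) * integral T (\<lambda>x. (d x)\<^sup>2 * f x)"
proof -
  let ?S = "{x \<in> T. \<delta> < d x}"
  have "?S \<inter> T = ?S" by blast
  then have "integral ?S f = integral T (\<lambda>x. if x \<in> ?S then f x else 0)"
    by (simp only: integral_restrict_Int)
  also have "\<dots> \<le> integral T (\<lambda>x. \<delta> powr (-2) * ((d x)\<^sup>2 * f x))"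
  proof (rule integral_le_if_integrable)
    show "(\<lambda>x. \<delta> powr (-2) * ((d x)\<^sup>2 * f x)) integrable_on T"
      using integrable_on_cmult_left[OF int, of "\<delta> powr (-2)"] by simp
    show "(if x \<in> ?S then f x else 0) \<le> \<delta> powr (-2) * ((d x)\<^sup>2 * f x)" if x: "x \<in> T" for x
    proof (cases "x \<in> ?S")
      case True
      then have "\<delta>\<^sup>2 \<le> (d x)\<^sup>2" using \<delta> by (intro power_mono) auto
      then have "1 \<le> \<delta> powr (-2) * (d x)\<^sup>2"
        using \<delta> by (simp add: powr_minus powr_realpow divide_simps)
      from mult_right_mono[OF this f[OF x]] True show ?thesis by (simp add: mult.assoc)
    qed (use f x in simp)
    show "0 \<le> integral T (\<lambda>x. \<delta> powr (-2) * ((d x)\<^sup>2 * f x))"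
        using integrable_on_cmult_left[OF int, of "\<delta> powr (-2)"] f by (intro integral_nonneg) auto
  qed
  also have "\<dots> = \<delta> powr (-2) * integral T (\<lambda>x. (d x)\<^sup>2 * f x)"
    by (rule Henstock_Kurzweil_Integration.integral_mult_right)
  finally show ?thesis .
qed

definition wt_sqrt :: "(real \<Rightarrow> real) \<Rightarrow> nat \<Rightarrow> real \<Rightarrow> real" where
  "wt_sqrt V n x = exp (- real n * V (cos x) / 2)"

lemma wt_sqrt_sq: "(wt_sqrt V n x)\<^sup>2 = wt V n x"
  by (simp add: wt_sqrt_def wt_def power2_eq_square exp_add[symmetric])

lemma psi_eq_gs_poly: "psi V n j x = gs_poly (wt V n) j x * complex_of_real (wt_sqrt V n x)"
  by (simp add: psi_def OP_def gs_poly_def wt_sqrt_def)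

lemma Kn_eq_gs_kernel:
  "Kn V n l m = complex_of_real (wt_sqrt V n l * wt_sqrt V n m) * gs_kernel (wt V n) n l m"
  by (simp add: Kn_def gs_kernel_def psi_eq_gs_poly sum_distrib_left mult_ac)

lemma continuous_on_V_cos:
  fixes V :: "real \<Rightarrow> real"
  assumes "continuous_on {-1..1} V" shows "continuous_on S (\<lambda>x. V (cos x))"
  by (rule continuous_on_compose2[OF assms]) (auto intro!: continuous_intros)

lemma positive_weight_wt:
  fixes V :: "real \<Rightarrow> real"
  assumes "continuous_on {-1..1} V" shows "positive_weight (wt V n)"
  by unfold_locales (auto simp: wt_def intro!: continuous_intros continuous_on_V_cos[OF assms])

lemma continuous_on_psi:
  assumes V: "continuous_on {-1..1} V" shows "continuous_on S (psi V n j)"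
proof -
  interpret positive_weight "wt V n" by (rule positive_weight_wt[OF V])
  show ?thesis
    unfolding psi_eq_gs_poly[abs_def] wt_sqrt_def
    by (auto intro!: continuous_intros continuous_on_gs_poly continuous_on_V_cos[OF V])
qed

lemma continuous_on_Kn:
  assumes "continuous_on {-1..1} V" shows "continuous_on S (Kn V n l)"
  unfolding Kn_def[abs_def] by (intro continuous_intros continuous_on_psi[OF assms])

lemma integral_norm_psi_sq:
  assumes V: "continuous_on {-1..1} V"
  shows "integral {-pi..pi} (\<lambda>x. (cmod (psi V n j x))\<^sup>2) = 1"
proof -
  interpret positive_weight "wt V n" by (rule positive_weight_wt[OF V])
  have "(\<lambda>x. (cmod (psi V n j x))\<^sup>2) = (\<lambda>x. (cmod (gs_poly (wt V n) j x))\<^sup>2 * wt V n x)"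
    by (simp add: psi_eq_gs_poly norm_mult power_mult_distrib wt_sqrt_sq[symmetric])
  then show ?thesis by (simp add: integral_norm_gs_poly_sq)
qed

lemma integral_norm_psi_pair_sq:
  assumes V: "continuous_on {-1..1} V"
  shows "integral {-pi..pi} (\<lambda>x. (cmod (psi V n (n - 1) x))\<^sup>2 + (cmod (psi V n n x))\<^sup>2) = 2"
  by (subst integral_add)
     (auto simp: integral_norm_psi_sq[OF V] intro!: integrable_continuous_interval continuous_intros
       continuous_on_psi[OF V])

lemma norm_integral_shift_Kn_le:
  assumes V: "continuous_on {-1..1} V" and n: "1 \<le> n"
  shows "cmod (integral {-pi..pi} (\<lambda>m. (exp (\<i> * of_real l) - exp (\<i> * of_real m))
             * complex_of_real ((cmod (Kn V n l m))\<^sup>2)))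
    \<le> 1/2 * ((cmod (psi V n (n - 1) l))\<^sup>2 + (cmod (psi V n n l))\<^sup>2)"
proof -
  interpret positive_weight "wt V n" by (rule positive_weight_wt[OF V])
  let ?s = "wt_sqrt V n" and ?Q = "gs_poly (wt V n)" and ?k = "gs_kernel (wt V n) n l"
  let ?e = "\<lambda>t. exp (\<i> * complex_of_real t)"
  define c where "c = ip (wt V n) (\<lambda>x. emode 1 x * ?Q (n - 1) x) (?Q n)"
  have "(cmod (Kn V n l m))\<^sup>2 = (?s l)\<^sup>2 * ((cmod (?k m))\<^sup>2 * wt V n m)" for m
    by (simp add: Kn_eq_gs_kernel norm_mult power_mult_distrib wt_sqrt_sq[symmetric] wt_sqrt_def)
  then have "integral {-pi..pi} (\<lambda>m. (?e l - ?e m) * complex_of_real ((cmod (Kn V n l m))\<^sup>2))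
      = complex_of_real ((?s l)\<^sup>2) * integral {-pi..pi} (\<lambda>m. (?e l - ?e m)
          * complex_of_real ((cmod (?k m))\<^sup>2 * wt V n m))"
    by (simp add: mult.left_commute flip: Henstock_Kurzweil_Integration.integral_mult_right)
  also have "\<dots> = complex_of_real ((?s l)\<^sup>2) * (cnj (?Q (n - 1) l) * c * ?Q n l)"
    unfolding c_def integral_shift_gs_kernel[OF n] ..
  finally have "cmod (integral {-pi..pi} (\<lambda>m. (?e l - ?e m) * complex_of_real ((cmod (Kn V n l m))\<^sup>2)))
      = cmod (psi V n (n - 1) l) * cmod (psi V n n l) * cmod c"
    by (simp add: psi_eq_gs_poly norm_mult power2_eq_square wt_sqrt_def)
  also have "\<dots> \<le> cmod (psi V n (n - 1) l) * cmod (psi V n n l)"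
    using norm_ip_shift_gs_poly_le unfolding c_def by (intro mult_left_le) simp_all
  also have "\<dots> \<le> 1/2 * ((cmod (psi V n (n - 1) l))\<^sup>2 + (cmod (psi V n n l))\<^sup>2)"
    using sum_squares_bound[of "cmod (psi V n (n - 1) l)" "cmod (psi V n n l)"] by simp
  finally show ?thesis .
qed

lemma integral_chord_sq_Kn_le:
  assumes V: "continuous_on {-1..1} V" and n: "1 \<le> n"
  shows "integral {-pi..pi} (\<lambda>m. (cmod (exp (\<i> * of_real l) - exp (\<i> * of_real m)))\<^sup>2
            * (cmod (Kn V n l m))\<^sup>2)
    \<le> (cmod (psi V n (n - 1) l))\<^sup>2 + (cmod (psi V n n l))\<^sup>2"
proof -
  have "continuous_on_circle (\<lambda>m. (cmod (Kn V n l m))\<^sup>2)"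
    by (intro continuous_intros continuous_on_Kn[OF V])
  then have "integral {-pi..pi} (\<lambda>m. (cmod (exp (\<i> * of_real l) - exp (\<i> * of_real m)))\<^sup>2
            * (cmod (Kn V n l m))\<^sup>2)
      \<le> 2 * cmod (integral {-pi..pi} (\<lambda>m. (exp (\<i> * of_real l) - exp (\<i> * of_real m))
             * complex_of_real ((cmod (Kn V n l m))\<^sup>2)))"
    by (rule integral_chord_sq_le)
  also have "\<dots> \<le> (cmod (psi V n (n - 1) l))\<^sup>2 + (cmod (psi V n n l))\<^sup>2"
    using norm_integral_shift_Kn_le[OF V n, of l] by simp
  finally show ?thesis .
qed

lemma double_integral_chord_sq_Kn_le:
  assumes V: "continuous_on {-1..1} V" and n: "1 \<le> n"
  shows "integral {-pi..pi} (\<lambda>l. integral {-pi..pi} (\<lambda>m.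
      (cmod (exp (\<i> * of_real l) - exp (\<i> * of_real m)))\<^sup>2 * (cmod (Kn V n l m))\<^sup>2)) \<le> 2"
proof -
  have "integral {-pi..pi} (\<lambda>l. integral {-pi..pi} (\<lambda>m.
      (cmod (exp (\<i> * of_real l) - exp (\<i> * of_real m)))\<^sup>2 * (cmod (Kn V n l m))\<^sup>2))
    \<le> integral {-pi..pi} (\<lambda>l. (cmod (psi V n (n - 1) l))\<^sup>2 + (cmod (psi V n n l))\<^sup>2)"
  proof (rule integral_le_if_integrable[OF _ integral_chord_sq_Kn_le[OF V n]])
    show "(\<lambda>l. (cmod (psi V n (n - 1) l))\<^sup>2 + (cmod (psi V n n l))\<^sup>2) integrable_on {-pi..pi}"
      by (intro integrable_continuous_interval continuous_intros continuous_on_psi[OF V])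
  qed (use integral_norm_psi_pair_sq[OF V, of n] in simp)
  then show ?thesis by (simp only: integral_norm_psi_pair_sq[OF V])
qed

lemma integral_far_Kn_le:
  assumes V: "continuous_on {-1..1} V" and n: "1 \<le> n" and \<delta>: "0 < \<delta>"
  shows "integral {m \<in> {-pi..pi}. cmod (exp (\<i> * of_real l) - exp (\<i> * of_real m)) > \<delta>}
      (\<lambda>m. (cmod (Kn V n l m))\<^sup>2)
    \<le> \<delta> powr (-2) * ((cmod (psi V n (n - 1) l))\<^sup>2 + (cmod (psi V n n l))\<^sup>2)"
proof -
  have "integral {m \<in> {-pi..pi}. cmod (exp (\<i> * of_real l) - exp (\<i> * of_real m)) > \<delta>}
      (\<lambda>m. (cmod (Kn V n l m))\<^sup>2)
    \<le> \<delta> powr (-2) * integral {-pi..pi} (\<lambda>m. (cmod (exp (\<i> * of_real l) - exp (\<i> * of_real m)))\<^sup>2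
          * (cmod (Kn V n l m))\<^sup>2)"
    by (rule integral_superlevel_le[OF _ _ \<delta>])
       (auto intro!: integrable_continuous_interval continuous_intros continuous_on_Kn[OF V])
  also have "\<dots> \<le> \<delta> powr (-2) * ((cmod (psi V n (n - 1) l))\<^sup>2 + (cmod (psi V n n l))\<^sup>2)"
    by (intro mult_left_mono integral_chord_sq_Kn_le[OF V n]) simp
  finally show ?thesis .
qed

lemma double_integral_far_Kn_le:
  assumes V: "continuous_on {-1..1} V" and n: "1 \<le> n" and \<delta>: "0 < \<delta>"
  shows "integral {-pi..pi} (\<lambda>l. integral
      {m \<in> {-pi..pi}. cmod (exp (\<i> * of_real l) - exp (\<i> * of_real m)) > \<delta>}
      (\<lambda>m. (cmod (Kn V n l m))\<^sup>2)) \<le> 2 * \<delta> powr (-2)"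
proof -
  have "integral {-pi..pi} (\<lambda>l. integral
      {m \<in> {-pi..pi}. cmod (exp (\<i> * of_real l) - exp (\<i> * of_real m)) > \<delta>}
      (\<lambda>m. (cmod (Kn V n l m))\<^sup>2))
    \<le> integral {-pi..pi} (\<lambda>l. \<delta> powr (-2) * ((cmod (psi V n (n - 1) l))\<^sup>2 + (cmod (psi V n n l))\<^sup>2))"
  proof (rule integral_le_if_integrable[OF _ integral_far_Kn_le[OF V n \<delta>]])
    show "(\<lambda>l. \<delta> powr (-2) * ((cmod (psi V n (n - 1) l))\<^sup>2 + (cmod (psi V n n l))\<^sup>2))
        integrable_on {-pi..pi}"
      by (intro integrable_continuous_interval continuous_intros continuous_on_psi[OF V])
  qed (simp_all only: Henstock_Kurzweil_Integration.integral_mult_right integral_norm_psi_pair_sq[OF V],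
       simp_all)
  also have "\<dots> = 2 * \<delta> powr (-2)"
    by (simp only: Henstock_Kurzweil_Integration.integral_mult_right integral_norm_psi_pair_sq[OF V])
  finally show ?thesis .
qed

theorem lemma1:
  fixes V :: "real \<Rightarrow> real" and \<rho> :: "real \<Rightarrow> real"
    and a b C1 C2 :: real
  assumes V_cont: "continuous_on {-1..1} V"
    and V_nonneg: "\<forall>t\<in>{-1..1}. 0 \<le> V t"
    and C2_1: "\<forall>x\<in>{-pi<..<pi}. (\<lambda>t. V (cos t)) differentiable at x"
    and C2_2: "\<forall>x\<in>{-pi<..<pi}. deriv (\<lambda>t. V (cos t)) differentiable at x"
    and C2_3: "continuous_on {-pi<..<pi} (deriv (deriv (\<lambda>t. V (cos t))))"
    and rho: "limit_density V \<rho>"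
    and ab: "a < b" "{a<..<b} \<subseteq> supp_dens \<rho>"
    and C1: "C1 > 0" and C2: "C2 > 0"
    and V3_ex: "\<forall>x\<in>{a<..<b}. deriv (deriv (\<lambda>t. V (cos t))) differentiable at x"
    and V3_bd: "\<forall>x\<in>{a<..<b}. \<bar>deriv (deriv (deriv (\<lambda>t. V (cos t)))) x\<bar> \<le> C1"
    and rho_lb: "AE x in lborel. x \<in> {a<..<b} \<longrightarrow> C2 \<le> \<rho> x"
  shows "\<forall>\<delta>>0. \<forall>n\<ge>1. \<forall>l\<in>{-pi..pi}.
     cmod (integral {-pi..pi} (\<lambda>m. (exp (\<i> * of_real l) - exp (\<i> * of_real m))
                                      * of_real ((cmod (Kn V n l m))\<^sup>2)))
       \<le> 1/2 * ((cmod (psi V n (n - 1) l))\<^sup>2 + (cmod (psi V n n l))\<^sup>2)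
   \<and> integral {-pi..pi} (\<lambda>m. (cmod (exp (\<i> * of_real l) - exp (\<i> * of_real m)))\<^sup>2
                                 * (cmod (Kn V n l m))\<^sup>2)
       \<le> (cmod (psi V n (n - 1) l))\<^sup>2 + (cmod (psi V n n l))\<^sup>2
   \<and> integral {-pi..pi} (\<lambda>l'. integral {-pi..pi} (\<lambda>m.
        (cmod (exp (\<i> * of_real l') - exp (\<i> * of_real m)))\<^sup>2 * (cmod (Kn V n l' m))\<^sup>2)) \<le> 2
   \<and> integral {m \<in> {-pi..pi}. cmod (exp (\<i> * of_real l) - exp (\<i> * of_real m)) > \<delta>}
        (\<lambda>m. (cmod (Kn V n l m))\<^sup>2)
       \<le> \<delta> powr (-2) * ((cmod (psi V n (n - 1) l))\<^sup>2 + (cmod (psi V n n l))\<^sup>2)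
   \<and> integral {-pi..pi} (\<lambda>l'. integral
        {m \<in> {-pi..pi}. cmod (exp (\<i> * of_real l') - exp (\<i> * of_real m)) > \<delta>}
        (\<lambda>m. (cmod (Kn V n l' m))\<^sup>2)) \<le> 2 * \<delta> powr (-2)"
  by (intro allI impI ballI conjI norm_integral_shift_Kn_le integral_chord_sq_Kn_le
      double_integral_chord_sq_Kn_le integral_far_Kn_le double_integral_far_Kn_le V_cont) simp_all

end
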